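(* Fix an integer $N\ge1$ and let $\lambda_n=8^n$ for $n\ge1$. Let $(m_n(t))_{n\ge1,t\ge0}$ be the solution of $$\frac{d}{dt}m_n(t)=-\lambda_nm_n(t)m_{n+1}(t),\quad n=1,2,\dots,$$ with $m_n(0)=2^{-n}$ for $n=1,\dots,2N$ and $m_n(0)=0$ for $n>2N$. Then for all $t\ge0$, $$m_{2n}(t)\ge\tfrac12m_{2n}(0)\quad(n\ge1),\qquad m_{2n+1}(t)\le m_{2n+1}(0)\exp\{-4^{2n}t\}\quad(n\ge0).$$
   Context: Since $m_n(0)=0$ for $n>2N$, one has $m_n\equiv0$ for $n>2N$, and the system reduces to a finite system of ODEs with a unique global non-negative solution. *)

theory Defs
  imports Complex_Main
begin

end

theory Submission
  imports Defs "HOL-Analysis.Analysis"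
begin

text \<open>Each equation is linear in its own unknown, so
  m_n(t) = m_n(0) exp(-8^n \<integral>_0^t m_{n+1}): all m_n stay non-negative and m_n = 0 for n > 2N.
  The two bounds then follow together by downward induction, starting from m_{2N+2} = 0.
  If m_{2n+2} never drops below half its initial value 2^{-2n-2}, then 8^{2n+1} m_{2n+2} \<ge> 4^{2n},
  which forces the exponential decay of m_{2n+1}. That decay in turn gives
  8^{2n} \<integral>_0^t m_{2n+1} \<le> 8^{2n} 2^{-2n-1} / 4^{2n} = 1/2, hence m_{2n}(t) \<ge> e^{-1/2} m_{2n}(0) \<ge> m_{2n}(0)/2.\<close>

lemma linear_ode_closed_form:
  fixes f a :: "real \<Rightarrow> real"
  assumes a_cont: "continuous_on {0..} a"
    and f_deriv: "\<And>s. s \<ge> 0 \<Longrightarrow> (f has_real_derivative - a s * f s) (at s within {0..})"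
    and "t \<ge> 0"
  shows "f t = f 0 * exp (- integral {0..t} a)"
proof -
  define g where "g s = f s * exp (integral {0..s} a)" for s
  have "(g has_real_derivative 0) (at s within {0..t})" if s: "s \<in> {0..t}" for s
  proof -
    have "((\<lambda>s. integral {0..s} a) has_real_derivative a s) (at s within {0..t})"
      using continuous_on_subset[OF a_cont] s by (intro integral_has_real_derivative) auto
    moreover have "(f has_real_derivative - a s * f s) (at s within {0..t})"
      using f_deriv[of s] s by (auto intro: DERIV_subset)
    ultimately show ?thesis
      unfolding g_def by (auto intro!: derivative_eq_intros simp: algebra_simps)
  qed
  then obtain c where "\<forall>s\<in>{0..t}. g s = c"
    using has_field_derivative_zero_constant[of "{0..t}" g] by auto
  then have "g t = g 0"
    using \<open>t \<ge> 0\<close> by auto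
  then show ?thesis
    by (simp add: g_def exp_minus field_simps)
qed

lemma integral_exp_neg_le:
  fixes c t :: real
  assumes "c > 0" "t \<ge> 0"
  shows "integral {0..t} (\<lambda>s. exp (- c * s)) \<le> 1 / c"
proof -
  have "((\<lambda>s. exp (- c * s)) has_integral (- exp (- c * t) / c) - (- exp (- c * 0) / c)) {0..t}"
    using assms by (intro fundamental_theorem_of_calculus)
      (auto intro!: derivative_eq_intros simp: has_real_derivative_iff_has_vector_derivative[symmetric])
  then show ?thesis
    using assms by (simp add: integral_unique divide_simps)
qed

lemma eight_power_odd_identity: "(8::real) ^ (2 * n + 1) * (1 / 2) ^ (2 * n + 2) / 2 = 4 ^ (2 * n)"
proof -
  have "(8::real) ^ (2 * n + 1) * (1 / 2) ^ (2 * n + 2) / 2 = 64 ^ n / 4 ^ n"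
    by (simp add: power_add power_mult power_divide)
  also have "\<dots> = 4 ^ (2 * n)"
    by (simp add: power_mult flip: power_divide)
  finally show ?thesis .
qed

lemma eight_power_even_identity: "(8::real) ^ (2 * n) * (1 / 2) ^ (2 * n + 1) / 4 ^ (2 * n) = 1 / 2"
proof -
  have "(64::real) ^ n = 4 ^ n * 16 ^ n"
    by (simp flip: power_mult_distrib)
  then show ?thesis
    by (simp add: power_add power_mult power_divide)
qed

locale cascade =
  fixes N :: nat and m :: "nat \<Rightarrow> real \<Rightarrow> real"
  assumes ode: "\<And>n t. n \<ge> 1 \<Longrightarrow> t \<ge> 0 \<Longrightarrow>
              (m n has_real_derivative (- (8 ^ n) * m n t * m (Suc n) t)) (at t within {0..})"
    and init: "\<And>n. n \<ge> 1 \<Longrightarrow> m n 0 = (if n \<le> 2 * N then (1 / 2) ^ n else 0)"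
begin

lemma continuous_on_m: "n \<ge> 1 \<Longrightarrow> continuous_on {0..} (m n)"
  unfolding continuous_on_eq_continuous_within using ode DERIV_continuous by fastforce

lemma integrable_m: "n \<ge> 1 \<Longrightarrow> m n integrable_on {0..t}"
  using continuous_on_m[of n] by (intro integrable_continuous_real) (auto elim: continuous_on_subset)

lemma m_closed_form:
  assumes "n \<ge> 1" "t \<ge> 0"
  shows "m n t = m n 0 * exp (- integral {0..t} (\<lambda>s. 8 ^ n * m (Suc n) s))"
proof (rule linear_ode_closed_form[OF _ _ \<open>t \<ge> 0\<close>])
  show "continuous_on {0..} (\<lambda>s. 8 ^ n * m (Suc n) s)"
    using continuous_on_m[of "Suc n"] by (intro continuous_intros) auto
  show "(m n has_real_derivative - (8 ^ n * m (Suc n) s) * m n s) (at s within {0..})"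
    if "s \<ge> 0" for s
    using ode[OF \<open>n \<ge> 1\<close> that] by (simp add: mult_ac)
qed

lemma m_nonneg: "n \<ge> 1 \<Longrightarrow> t \<ge> 0 \<Longrightarrow> m n t \<ge> 0"
  using m_closed_form[of n t] init[of n] by simp

lemma m_vanishes: "n > 2 * N \<Longrightarrow> t \<ge> 0 \<Longrightarrow> m n t = 0"
  using m_closed_form[of n t] init[of n] by simp

lemma odd_decay_of_even_half_bound:
  assumes even_bound: "\<And>s. s \<ge> 0 \<Longrightarrow> m (2 * n + 2) s \<ge> m (2 * n + 2) 0 / 2"
    and "t \<ge> 0"
  shows "m (2 * n + 1) t \<le> m (2 * n + 1) 0 * exp (- (4 ^ (2 * n)) * t)"
proof (cases "2 * n + 1 \<le> 2 * N")
  case True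
  then have "2 * n + 2 \<le> 2 * N"
    by presburger
  then have "m (2 * n + 2) 0 = (1 / 2) ^ (2 * n + 2)"
    using init[of "2 * n + 2"] by simp
  then have "8 ^ (2 * n + 1) * m (2 * n + 2) s \<ge> 4 ^ (2 * n)" if "s \<in> {0..t}" for s
  proof -
    have "(4::real) ^ (2 * n) = 8 ^ (2 * n + 1) * ((1 / 2) ^ (2 * n + 2) / 2)"
      using eight_power_odd_identity[of n] by simp
    also have "\<dots> \<le> 8 ^ (2 * n + 1) * m (2 * n + 2) s"
      using even_bound[of s] that \<open>m (2 * n + 2) 0 = _\<close> by (intro mult_left_mono) auto
    finally show ?thesis .
  qed
  then have "integral {0..t} (\<lambda>_. 4 ^ (2 * n)) \<le> integral {0..t} (\<lambda>s. 8 ^ (2 * n + 1) * m (2 * n + 2) s)"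
    using integrable_m[of "2 * n + 2" t]
    by (intro integral_le integrable_on_mult_right) auto
  then have "exp (- integral {0..t} (\<lambda>s. 8 ^ (2 * n + 1) * m (2 * n + 2) s)) \<le> exp (- (4 ^ (2 * n)) * t)"
    using \<open>t \<ge> 0\<close> by (simp add: mult.commute)
  then show ?thesis
    using m_closed_form[of "2 * n + 1" t] m_nonneg[of "2 * n + 1" 0] \<open>t \<ge> 0\<close>
    by (simp add: mult_left_mono)
next
  case False
  then show ?thesis
    using m_vanishes[of "2 * n + 1" t] init[of "2 * n + 1"] \<open>t \<ge> 0\<close> by simp
qed

lemma odd_weighted_integral_le_half:
  assumes odd_bound: "\<And>s. s \<ge> 0 \<Longrightarrow> m (2 * n + 1) s \<le> m (2 * n + 1) 0 * exp (- (4 ^ (2 * n)) * s)"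
    and "t \<ge> 0"
  shows "integral {0..t} (\<lambda>s. 8 ^ (2 * n) * m (2 * n + 1) s) \<le> 1 / 2"
proof -
  define c :: real where "c = 4 ^ (2 * n)"
  define K :: real where "K = 8 ^ (2 * n) * (1 / 2) ^ (2 * n + 1)"
  have pointwise_bound: "8 ^ (2 * n) * m (2 * n + 1) s \<le> K * exp (- c * s)"
    if "s \<in> {0..t}" for s
  proof -
    have "m (2 * n + 1) s \<le> m (2 * n + 1) 0 * exp (- c * s)"
      using odd_bound[of s] that by (simp add: c_def)
    also have "\<dots> \<le> (1 / 2) ^ (2 * n + 1) * exp (- c * s)"
      using init[of "2 * n + 1"] by (intro mult_right_mono) auto
    finally show ?thesis
      unfolding K_def by (simp add: mult.assoc)
  qed
  have "integral {0..t} (\<lambda>s. 8 ^ (2 * n) * m (2 * n + 1) s)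
      \<le> integral {0..t} (\<lambda>s. K * exp (- c * s))"
  proof (rule integral_le)
    show "(\<lambda>s. 8 ^ (2 * n) * m (2 * n + 1) s) integrable_on {0..t}"
      using integrable_m[of "2 * n + 1" t] by (rule integrable_on_mult_right) simp
    show "(\<lambda>s. K * exp (- c * s)) integrable_on {0..t}"
      by (intro integrable_continuous_real continuous_intros)
  qed (rule pointwise_bound)
  also have "\<dots> = K * integral {0..t} (\<lambda>s. exp (- c * s))"
    by simp
  also have "\<dots> \<le> K * (1 / c)"
    using integral_exp_neg_le[of c t] \<open>t \<ge> 0\<close> by (intro mult_left_mono) (simp_all add: c_def K_def)
  also have "\<dots> = 1 / 2"
    using eight_power_even_identity[of n] by (simp add: c_def K_def)
  finally show ?thesis .
qed

lemma even_half_bound_of_odd_decay: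
  assumes "n \<ge> 1"
    and odd_bound: "\<And>s. s \<ge> 0 \<Longrightarrow> m (2 * n + 1) s \<le> m (2 * n + 1) 0 * exp (- (4 ^ (2 * n)) * s)"
    and "t \<ge> 0"
  shows "m (2 * n) t \<ge> m (2 * n) 0 / 2"
proof -
  let ?E = "exp (- integral {0..t} (\<lambda>s. 8 ^ (2 * n) * m (Suc (2 * n)) s))"
  have "1 / 2 \<le> exp (- (1 / 2) :: real)"
    using exp_half_le2 by (simp add: exp_minus divide_simps)
  also have "\<dots> \<le> ?E"
    using odd_weighted_integral_le_half[OF odd_bound \<open>t \<ge> 0\<close>] by simp
  finally have "m (2 * n) 0 * (1 / 2) \<le> m (2 * n) 0 * ?E"
    using m_nonneg[of "2 * n" 0] \<open>n \<ge> 1\<close> by (intro mult_left_mono) auto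
  then show ?thesis
    using m_closed_form[of "2 * n" t] \<open>n \<ge> 1\<close> \<open>t \<ge> 0\<close> by simp
qed

lemma even_half_bound:
  assumes "n \<ge> 1" "t \<ge> 0"
  shows "m (2 * n) t \<ge> m (2 * n) 0 / 2"
  using assms
proof (induction "N + 1 - n" arbitrary: n t rule: less_induct)
  case less
  show ?case
  proof (cases "n \<le> N")
    case True
    then have "m (2 * n + 2) s \<ge> m (2 * n + 2) 0 / 2" if "s \<ge> 0" for s
      using less.hyps[of "n + 1" s] that by simp
    then have "m (2 * n + 1) s \<le> m (2 * n + 1) 0 * exp (- (4 ^ (2 * n)) * s)" if "s \<ge> 0" for s
      using that by (rule odd_decay_of_even_half_bound)
    then show ?thesis
      by (rule even_half_bound_of_odd_decay[OF less.prems(1) _ less.prems(2)])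
  next
    case False
    then show ?thesis
      using m_vanishes[of "2 * n"] less.prems by simp
  qed
qed

end

theorem proposition3p1:
  fixes N :: nat and m :: "nat \<Rightarrow> real \<Rightarrow> real"
  assumes N: "N \<ge> 1"
    and ode: "\<And>n t. n \<ge> 1 \<Longrightarrow> t \<ge> 0 \<Longrightarrow>
              (m n has_real_derivative (- (8 ^ n) * m n t * m (Suc n) t)) (at t within {0..})"
    and init: "\<And>n. n \<ge> 1 \<Longrightarrow> m n 0 = (if n \<le> 2 * N then (1 / 2) ^ n else 0)"
  shows "\<forall>t\<ge>0. (\<forall>n\<ge>1. m (2 * n) t \<ge> m (2 * n) 0 / 2) \<and>
                 (\<forall>n. m (2 * n + 1) t \<le> m (2 * n + 1) 0 * exp (- (4 ^ (2 * n)) * t))"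
proof -
  interpret cascade N m
    using ode init by unfold_locales
  have "m (2 * n + 2) s \<ge> m (2 * n + 2) 0 / 2" if "s \<ge> 0" for n s
    using even_half_bound[of "n + 1" s] that by simp
  then have "m (2 * n + 1) t \<le> m (2 * n + 1) 0 * exp (- (4 ^ (2 * n)) * t)" if "t \<ge> 0" for n t
    using that by (rule odd_decay_of_even_half_bound)
  then show ?thesis
    using even_half_bound by simp
qed

end
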